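(* Let $V\in C^\infty(\mathbb{R})$ be real-valued, let $D=\frac{d}{dx}$, let $L=D^2+V(x)$, and let $N\ge 0$ be an integer. The following are equivalent: (i) there exists a linear differential operator $Q=D^{2N+1}+\sum_{j=0}^{2N} q_j(x)D^j$ with $q_j\in C^\infty(\mathbb{R})$ such that $[Q,L]=0$; (ii) there exist functions $a_0,\dots,a_N,b_0,\dots,b_N\in C^\infty(\mathbb{R})$ with $a_N\equiv 1$, and a function $r(x,\varepsilon)$, such that for every real $\varepsilon$ the first-order operator $$\hat Q_\varepsilon=\Big(\sum_{j=0}^N a_j(x)\varepsilon^j\Big)D+\sum_{j=0}^N b_j(x)\varepsilon^j$$ is a Lie symmetry of the equation $(L+\varepsilon)\psi=0$, i.e. $[L+\varepsilon,\hat Q_\varepsilon]=r(x,\varepsilon)\,(L+\varepsilon)$ as differential operators.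
   Context: Sign convention: the paper writes its Hamiltonian as $H=-\frac{d^2}{dx^2}+V$, but its determining equations and recursion operators match the operator $L=\frac{d^2}{dx^2}+V$ (equivalently $H=-\frac{d^2}{dx^2}-V$); the statement is given in that consistent convention. A differential operator $\hat Q$ is a (Lie) symmetry of $A\psi=0$ if $[A,\hat Q]=PA$ for some differential operator $P$; for first-order $\hat Q$ and second-order $A=L+\varepsilon$, $P$ is multiplication by a function $r$. *)

theory Defs
  imports "HOL-Analysis.Analysis"
begin

definition smooth :: "(real \<Rightarrow> real) \<Rightarrow> bool" where
  "smooth f \<longleftrightarrow> (\<forall>k x. ((deriv ^^ k) f) differentiable (at x))"

definition Dn :: "nat \<Rightarrow> (real \<Rightarrow> real) \<Rightarrow> real \<Rightarrow> real" where
  "Dn k f = (deriv ^^ k) f"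

definition schrL :: "(real \<Rightarrow> real) \<Rightarrow> (real \<Rightarrow> real) \<Rightarrow> real \<Rightarrow> real" where
  "schrL V \<psi> = (\<lambda>x. Dn 2 \<psi> x + V x * \<psi> x)"

definition opQ :: "nat \<Rightarrow> (nat \<Rightarrow> real \<Rightarrow> real) \<Rightarrow> (real \<Rightarrow> real) \<Rightarrow> real \<Rightarrow> real" where
  "opQ N q \<psi> = (\<lambda>x. Dn (2*N+1) \<psi> x + (\<Sum>j\<le>2*N. q j x * Dn j \<psi> x))"

definition opQhat :: "nat \<Rightarrow> (nat \<Rightarrow> real \<Rightarrow> real) \<Rightarrow> (nat \<Rightarrow> real \<Rightarrow> real) \<Rightarrow> real
    \<Rightarrow> (real \<Rightarrow> real) \<Rightarrow> real \<Rightarrow> real" where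
  "opQhat N a b \<epsilon> \<psi> = (\<lambda>x. (\<Sum>j\<le>N. a j x * \<epsilon>^j) * deriv \<psi> x + (\<Sum>j\<le>N. b j x * \<epsilon>^j) * \<psi> x)"

end

theory Submission
  imports Defs
begin

text \<open>On solutions of (L + \<epsilon>)\<psi> = 0 we have (-L)^k \<psi> = \<epsilon>^k \<psi>, so an operator
  \<Sum>_k (a_k D + b_k)(-L)^k acts there as the first-order operator
  Qhat_\<epsilon> = (\<Sum>_k a_k \<epsilon>^k) D + \<Sum>_k b_k \<epsilon>^k.
  Since (-L)^k and D(-L)^k have orders 2k and 2k + 1 with leading coefficient (-1)^k, every
  differential operator of order 2N + 1 is uniquely such an expansion (uniqueness is tested on
  Taylor monomials), and for (-1)^N Q the top coefficient is a_N = 1.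
  The commutator of L with an expansion is again an expansion; its coefficients vanish exactly
  when the \<epsilon>^k-coefficients of the determining equations a'' + 2b' = 0 and
  b'' - a V' - 2a' V = 2\<epsilon> a' of the symmetry Qhat_\<epsilon> of L + \<epsilon> vanish. So both conditions of the
  theorem are equivalent to the same recursion for the coefficients a_k, b_k.\<close>

section \<open>Smooth functions\<close>

lemma smooth_iff_deriv: "smooth f \<longleftrightarrow> (\<forall>x. f differentiable at x) \<and> smooth (deriv f)"
  unfolding smooth_def
proof safe
  fix k x assume "\<forall>k x. (deriv ^^ k) f differentiable at x"
  then show "(deriv ^^ k) (deriv f) differentiable at x"
    by (metis funpow_Suc_right o_apply)
next
  fix x assume "\<forall>k x. (deriv ^^ k) f differentiable at x"
  then show "f differentiable at x" by (metis funpow_0)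
next
  fix k x assume "\<forall>x. f differentiable at x" "\<forall>k x. (deriv ^^ k) (deriv f) differentiable at x"
  then show "(deriv ^^ k) f differentiable at x"
    by (cases k) (auto simp del: funpow.simps simp: funpow_Suc_right)
qed

lemma smooth_coinduct:
  assumes "P f" and step: "\<And>g. P g \<Longrightarrow> (\<forall>x. g differentiable at x) \<and> P (deriv g)"
  shows "smooth f"
proof -
  have "\<forall>g. P g \<longrightarrow> (\<forall>x. (deriv ^^ k) g differentiable at x)" for k
  proof (induction k)
    case 0 then show ?case using step by simp
  next
    case (Suc k) then show ?case using step
      by (auto simp del: funpow.simps simp: funpow_Suc_right)
  qed
  then show ?thesis using assms(1) unfolding smooth_def by blast
qed

lemma smooth_differentiable: "smooth f \<Longrightarrow> f differentiable at x"
  using smooth_iff_deriv by blast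

lemma smooth_field_differentiable: "smooth f \<Longrightarrow> f field_differentiable at x"
  by (metis smooth_differentiable DERIV_deriv_iff_real_differentiable
      DERIV_deriv_iff_field_differentiable)

lemma smooth_has_real_derivative: "smooth f \<Longrightarrow> (f has_real_derivative deriv f x) (at x)"
  using smooth_differentiable DERIV_deriv_iff_real_differentiable by blast

lemma smooth_deriv: "smooth f \<Longrightarrow> smooth (deriv f)"
  using smooth_iff_deriv by blast

text \<open>Closure under products is proved coinductively for finite sums of products of smooth
  functions, the smallest class that is stable under the product rule.\<close>

definition sum_of_products :: "((real \<Rightarrow> real) \<times> (real \<Rightarrow> real)) list \<Rightarrow> real \<Rightarrow> real" where
  "sum_of_products ps = (\<lambda>x. \<Sum>(f, g)\<leftarrow>ps. f x * g x)"

definition product_rule_terms ::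
    "((real \<Rightarrow> real) \<times> (real \<Rightarrow> real)) list \<Rightarrow> ((real \<Rightarrow> real) \<times> (real \<Rightarrow> real)) list" where
  "product_rule_terms ps = concat (map (\<lambda>(f, g). [(deriv f, g), (f, deriv g)]) ps)"

lemma has_real_derivative_sum_of_products:
  assumes "\<forall>(f, g)\<in>set ps. smooth f \<and> smooth g"
  shows "(sum_of_products ps has_real_derivative sum_of_products (product_rule_terms ps) x) (at x)"
  using assms
proof (induction ps)
  case Nil then show ?case by (simp add: sum_of_products_def product_rule_terms_def)
next
  case (Cons p ps)
  obtain f g where p: "p = (f, g)" by force
  have "smooth f" "smooth g" using Cons.prems p by auto
  moreover have "(sum_of_products ps has_real_derivative sum_of_products (product_rule_terms ps) x) (at x)"
    using Cons by auto
  moreover have "sum_of_products (p # ps) = (\<lambda>x. f x * g x + sum_of_products ps x)"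
    by (simp add: sum_of_products_def p)
  moreover have "sum_of_products (product_rule_terms (p # ps)) x
      = deriv f x * g x + f x * deriv g x + sum_of_products (product_rule_terms ps) x"
    by (simp add: sum_of_products_def product_rule_terms_def p)
  ultimately show ?case
    by (auto intro!: derivative_eq_intros smooth_has_real_derivative)
qed

lemma smooth_sum_of_products:
  assumes "\<forall>(f, g)\<in>set ps. smooth f \<and> smooth g"
  shows "smooth (sum_of_products ps)"
proof (rule smooth_coinduct[where
      P = "\<lambda>h. \<exists>ps. (\<forall>(f, g)\<in>set ps. smooth f \<and> smooth g) \<and> h = sum_of_products ps"])
  fix h assume "\<exists>ps. (\<forall>(f, g)\<in>set ps. smooth f \<and> smooth g) \<and> h = sum_of_products ps"
  then obtain ps where ps: "\<forall>(f, g)\<in>set ps. smooth f \<and> smooth g" and h: "h = sum_of_products ps"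
    by blast
  have D: "(h has_real_derivative sum_of_products (product_rule_terms ps) x) (at x)" for x
    unfolding h using has_real_derivative_sum_of_products[OF ps] .
  then have "\<forall>x. h differentiable at x" using real_differentiable_def by blast
  moreover have "deriv h = sum_of_products (product_rule_terms ps)" using D DERIV_imp_deriv by blast
  moreover have "\<forall>(f, g)\<in>set (product_rule_terms ps). smooth f \<and> smooth g"
    using ps by (auto simp: product_rule_terms_def smooth_deriv)
  ultimately show "(\<forall>x. h differentiable at x) \<and>
      (\<exists>ps. (\<forall>(f, g)\<in>set ps. smooth f \<and> smooth g) \<and> deriv h = sum_of_products ps)"
    by blast
qed (use assms in blast)

lemma smooth_const [simp]: "smooth (\<lambda>x. c)"
  by (rule smooth_coinduct[where P = "\<lambda>h. \<exists>c. h = (\<lambda>x. c)"]) auto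

lemma smooth_mult [intro]: "smooth f \<Longrightarrow> smooth g \<Longrightarrow> smooth (\<lambda>x. f x * g x)"
  using smooth_sum_of_products[of "[(f, g)]"] by (simp add: sum_of_products_def)

lemma smooth_add [intro]: "smooth f \<Longrightarrow> smooth g \<Longrightarrow> smooth (\<lambda>x. f x + g x)"
  using smooth_sum_of_products[of "[(f, \<lambda>x. 1), (g, \<lambda>x. 1)]"] by (simp add: sum_of_products_def)

lemma smooth_cmult [intro]: "smooth f \<Longrightarrow> smooth (\<lambda>x. c * f x)"
  using smooth_mult[of "\<lambda>x. c" f] by simp

lemma smooth_minus [intro]: "smooth f \<Longrightarrow> smooth (\<lambda>x. - f x)"
  using smooth_cmult[of f "-1"] by simp

lemma smooth_diff [intro]: "smooth f \<Longrightarrow> smooth g \<Longrightarrow> smooth (\<lambda>x. f x - g x)"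
  using smooth_add[of f "\<lambda>x. - g x"] by auto

lemma smooth_divide_const [intro]: "smooth f \<Longrightarrow> smooth (\<lambda>x. f x / c)"
  using smooth_cmult[of f "1 / c"] by simp

lemma smooth_sum [intro]: "(\<And>i. i \<in> S \<Longrightarrow> smooth (f i)) \<Longrightarrow> smooth (\<lambda>x. \<Sum>i\<in>S. f i x)"
  by (induction S rule: infinite_finite_induct) auto

lemma smooth_Dn [intro]: "smooth f \<Longrightarrow> smooth (Dn k f)"
  by (induction k) (auto simp: Dn_def smooth_deriv)

lemma Dn_0 [simp]: "Dn 0 f = f"
  by (simp add: Dn_def)

lemma Dn_Suc: "Dn (Suc k) f = deriv (Dn k f)"
  by (simp add: Dn_def)

lemma Dn_2: "Dn 2 f = deriv (deriv f)"
  by (simp add: Dn_def numeral_2_eq_2)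

lemmas smooth_deriv_simps = smooth_field_differentiable smooth_mult smooth_add smooth_deriv
  smooth_cmult smooth_minus smooth_diff smooth_Dn

lemma Dn_cmult: "smooth \<phi> \<Longrightarrow> Dn k (\<lambda>x. s * \<phi> x) = (\<lambda>x. s * Dn k \<phi> x)"
proof (induction k)
  case (Suc k) then show ?case by (simp add: Dn_Suc smooth_deriv_simps)
qed simp

lemma deriv_polynomial:
  assumes "\<And>j. smooth (f j)"
  shows "deriv (\<lambda>x. \<Sum>j\<le>N. f j x * e ^ j) = (\<lambda>x. \<Sum>j\<le>N. deriv (f j) x * e ^ j)"
  using assms by (intro ext) (simp add: smooth_deriv_simps)

section \<open>Differential operators with smooth coefficients\<close>

definition taylor_monomial :: "real \<Rightarrow> nat \<Rightarrow> real \<Rightarrow> real" where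
  "taylor_monomial x0 m = (\<lambda>x. (x - x0) ^ m / fact m)"

lemma has_real_derivative_taylor_monomial:
  "(taylor_monomial x0 m has_real_derivative (if m = 0 then 0 else taylor_monomial x0 (m - 1) x)) (at x)"
proof (cases m)
  case 0 then show ?thesis by (simp add: taylor_monomial_def)
next
  case (Suc k)
  have "((\<lambda>x. (x - x0) ^ m) has_real_derivative real m * (1 * (x - x0) ^ (m - Suc 0))) (at x)"
    by (rule DERIV_power) (auto intro!: derivative_eq_intros)
  then have "((\<lambda>x. (x - x0) ^ m / fact m) has_real_derivative
      real m * (1 * (x - x0) ^ (m - Suc 0)) / fact m) (at x)"
    by (rule DERIV_cdivide)
  moreover have "real m * (1 * (x - x0) ^ (m - Suc 0)) / fact m = (x - x0) ^ k / fact k"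
    using Suc by (simp add: fact_Suc)
  ultimately show ?thesis using Suc by (simp add: taylor_monomial_def)
qed

lemma deriv_taylor_monomial:
  "deriv (taylor_monomial x0 m) = (if m = 0 then (\<lambda>_. 0) else taylor_monomial x0 (m - 1))"
  using DERIV_imp_deriv[OF has_real_derivative_taylor_monomial] by auto

lemma smooth_taylor_monomial: "smooth (taylor_monomial x0 m)"
proof (rule smooth_coinduct[where P = "\<lambda>h. (\<exists>m. h = taylor_monomial x0 m) \<or> h = (\<lambda>_. 0)"])
  fix g assume g: "(\<exists>m. g = taylor_monomial x0 m) \<or> g = (\<lambda>_. 0)"
  then have "\<forall>x. g differentiable at x"
    using has_real_derivative_taylor_monomial real_differentiable_def by fastforce
  moreover have "(\<exists>m. deriv g = taylor_monomial x0 m) \<or> deriv g = (\<lambda>_. 0)"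
    using g by (auto simp: deriv_taylor_monomial)
  ultimately show "(\<forall>x. g differentiable at x) \<and> ((\<exists>m. deriv g = taylor_monomial x0 m) \<or> deriv g = (\<lambda>_. 0))"
    by blast
qed auto

lemma Dn_taylor_monomial:
  "Dn i (taylor_monomial x0 m) = (if i \<le> m then taylor_monomial x0 (m - i) else (\<lambda>_. 0))"
proof (induction i)
  case (Suc i) then show ?case by (auto simp: Dn_Suc deriv_taylor_monomial Suc_diff_Suc)
qed simp

lemma Dn_taylor_monomial_at_center: "Dn i (taylor_monomial x0 m) x0 = (if i = m then 1 else 0)"
  by (simp add: Dn_taylor_monomial) (simp add: taylor_monomial_def)

definition diff_op :: "nat \<Rightarrow> (nat \<Rightarrow> real \<Rightarrow> real) \<Rightarrow> ((real \<Rightarrow> real) \<Rightarrow> real \<Rightarrow> real) \<Rightarrow> bool" where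
  "diff_op n c T \<longleftrightarrow> (\<forall>i. smooth (c i)) \<and> (\<forall>i>n. c i = (\<lambda>_. 0)) \<and>
     (\<forall>\<psi>. smooth \<psi> \<longrightarrow> T \<psi> = (\<lambda>x. \<Sum>i\<le>n. c i x * Dn i \<psi> x))"

lemma diff_op_cong: "diff_op n c T \<Longrightarrow> (\<And>\<psi>. smooth \<psi> \<Longrightarrow> S \<psi> = T \<psi>) \<Longrightarrow> diff_op n c S"
  unfolding diff_op_def by auto

lemma diff_op_coeff_above: "diff_op n c T \<Longrightarrow> n < i \<Longrightarrow> c i = (\<lambda>_. 0)"
  unfolding diff_op_def by auto

lemma diff_op_apply: "diff_op n c T \<Longrightarrow> smooth \<psi> \<Longrightarrow> T \<psi> x = (\<Sum>i\<le>n. c i x * Dn i \<psi> x)"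
  unfolding diff_op_def by auto

lemma diff_op_smooth_coeff: "diff_op n c T \<Longrightarrow> smooth (c i)"
  unfolding diff_op_def by auto

lemma diff_op_smooth: "diff_op n c T \<Longrightarrow> smooth \<psi> \<Longrightarrow> smooth (T \<psi>)"
  unfolding diff_op_def by (auto intro!: smooth_sum smooth_mult smooth_Dn)

lemma diff_op_mono:
  assumes "diff_op n c T" "n \<le> m"
  shows "diff_op m c T"
proof -
  have "(\<Sum>i\<le>m. c i x * Dn i \<psi> x) = (\<Sum>i\<le>n. c i x * Dn i \<psi> x)" for \<psi> x
    using assms by (intro sum.mono_neutral_right) (auto simp: diff_op_def)
  then show ?thesis using assms unfolding diff_op_def by auto
qed

lemma diff_op_drop_top:
  assumes T: "diff_op (Suc m) c T" and top: "c (Suc m) = (\<lambda>_. 0)"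
  shows "diff_op m c T"
proof -
  have "c i = (\<lambda>_. 0)" if "m < i" for i
    using that top diff_op_coeff_above[OF T, of i] by (cases "i = Suc m") auto
  moreover have "T \<psi> = (\<lambda>x. \<Sum>i\<le>m. c i x * Dn i \<psi> x)" if "smooth \<psi>" for \<psi>
    using diff_op_apply[OF T that] top by auto
  ultimately show ?thesis using T unfolding diff_op_def by auto
qed

lemma diff_op_id: "diff_op 0 (\<lambda>i. if i = 0 then (\<lambda>_. 1) else (\<lambda>_. 0)) (\<lambda>\<psi>. \<psi>)"
  unfolding diff_op_def by auto

lemma diff_op_mult:
  "diff_op n c T \<Longrightarrow> smooth f \<Longrightarrow> diff_op n (\<lambda>i x. f x * c i x) (\<lambda>\<psi> x. f x * T \<psi> x)"
  unfolding diff_op_def by (auto simp: sum_distrib_left mult.assoc)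

lemma diff_op_cmult: "diff_op n c T \<Longrightarrow> diff_op n (\<lambda>i x. s * c i x) (\<lambda>\<psi> x. s * T \<psi> x)"
  using diff_op_mult[of n c T "\<lambda>_. s"] by simp

lemma diff_op_add:
  "diff_op n c T \<Longrightarrow> diff_op n d S \<Longrightarrow> diff_op n (\<lambda>i x. c i x + d i x) (\<lambda>\<psi> x. T \<psi> x + S \<psi> x)"
  unfolding diff_op_def by (auto simp: sum.distrib distrib_right)

lemma diff_op_sum:
  assumes "finite I" "\<And>k. k \<in> I \<Longrightarrow> diff_op n (c k) (T k)"
  shows "diff_op n (\<lambda>i x. \<Sum>k\<in>I. c k i x) (\<lambda>\<psi> x. \<Sum>k\<in>I. T k \<psi> x)"
  using assms
proof (induction I rule: finite_induct)
  case empty then show ?case unfolding diff_op_def by simp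
next
  case (insert k I) then show ?case by (simp add: diff_op_add)
qed

lemma diff_op_deriv:
  assumes T: "diff_op n c T"
  shows "diff_op (Suc n) (\<lambda>i x. deriv (c i) x + (case i of 0 \<Rightarrow> 0 | Suc j \<Rightarrow> c j x)) (\<lambda>\<psi>. deriv (T \<psi>))"
proof -
  have sc: "smooth (c i)" for i using T diff_op_smooth_coeff by blast
  have above: "c i = (\<lambda>_. 0)" if "n < i" for i using T diff_op_coeff_above that by blast
  have "smooth (\<lambda>x. deriv (c i) x + (case i of 0 \<Rightarrow> 0 | Suc j \<Rightarrow> c j x))" for i
    by (cases i) (auto intro!: smooth_add smooth_deriv sc simp del: One_nat_def)
  moreover have "(\<lambda>x. deriv (c i) x + (case i of 0 \<Rightarrow> 0 | Suc j \<Rightarrow> c j x)) = (\<lambda>_. 0)"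
    if "Suc n < i" for i
    using that above[of i] above[of "i - 1"] by (cases i) auto
  moreover have "deriv (T \<psi>) x
      = (\<Sum>i\<le>Suc n. (deriv (c i) x + (case i of 0 \<Rightarrow> 0 | Suc j \<Rightarrow> c j x)) * Dn i \<psi> x)"
    if \<psi>: "smooth \<psi>" for \<psi> x
  proof -
    have "deriv (T \<psi>) x = (\<Sum>i\<le>n. c i x * Dn (Suc i) \<psi> x) + (\<Sum>i\<le>n. deriv (c i) x * Dn i \<psi> x)"
      using T \<psi> by (simp add: diff_op_def smooth_deriv_simps sc Dn_Suc sum.distrib)
    also have "(\<Sum>i\<le>n. deriv (c i) x * Dn i \<psi> x) = (\<Sum>i\<le>Suc n. deriv (c i) x * Dn i \<psi> x)"
      using above[of "Suc n"] by simp
    also have "(\<Sum>i\<le>n. c i x * Dn (Suc i) \<psi> x)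
        = (\<Sum>i\<le>Suc n. (case i of 0 \<Rightarrow> 0 | Suc j \<Rightarrow> c j x) * Dn i \<psi> x)"
      by (subst sum.atMost_Suc_shift) simp
    finally show ?thesis by (simp add: sum.distrib distrib_right)
  qed
  ultimately show ?thesis unfolding diff_op_def by auto
qed

lemma diff_op_scale_arg:
  assumes "diff_op n c T" "smooth \<phi>"
  shows "T (\<lambda>x. s * \<phi> x) = (\<lambda>x. s * T \<phi> x)"
  using assms by (auto simp: diff_op_def Dn_cmult sum_distrib_left algebra_simps)

lemma diff_op_at_taylor_monomial:
  assumes "diff_op n c T"
  shows "T (taylor_monomial x0 m) x0 = (if m \<le> n then c m x0 else 0)"
proof -
  have "T (taylor_monomial x0 m) x0 = (\<Sum>i\<le>n. c i x0 * Dn i (taylor_monomial x0 m) x0)"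
    using diff_op_apply[OF assms smooth_taylor_monomial] .
  also have "\<dots> = (\<Sum>i\<le>n. if i = m then c m x0 else 0)"
    by (intro sum.cong) (auto simp: Dn_taylor_monomial_at_center)
  finally show ?thesis by simp
qed

lemma diff_op_opQ:
  assumes "\<forall>j\<le>2*N. smooth (q j)"
  shows "diff_op (Suc (2*N)) (\<lambda>j. if j = Suc (2*N) then (\<lambda>_. 1) else if j \<le> 2*N then q j else (\<lambda>_. 0))
    (opQ N q)"
  using assms unfolding diff_op_def opQ_def by (auto simp: sum.atMost_Suc intro!: sum.cong)

lemma opQ_eq_diff_op:
  assumes T: "diff_op (Suc (2*N)) c T" and top: "c (Suc (2*N)) = (\<lambda>_. 1)" and "smooth \<psi>"
  shows "opQ N c \<psi> = T \<psi>"
  using diff_op_apply[OF T \<open>smooth \<psi>\<close>] top by (auto simp: opQ_def sum.atMost_Suc)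

lemma diff_op_triangular_sum:
  assumes E: "\<And>i. diff_op i (e i) (E i)" and g: "\<And>i. smooth (g i)"
  shows "diff_op n (\<lambda>j x. \<Sum>i\<le>n. g i x * e i j x) (\<lambda>\<psi> x. \<Sum>i\<le>n. g i x * E i \<psi> x)"
  by (rule diff_op_sum) (auto intro: diff_op_mult diff_op_mono[OF E] g)

lemma triangular_sum_top_coeff:
  assumes E: "\<And>i. diff_op i (e i) (E i)"
  shows "(\<Sum>i\<le>n. g i x * e i n x) = g n x * e n n x"
proof -
  have "e i n x = 0" if "i < n" for i using diff_op_coeff_above[OF E that] by simp
  then have "(\<Sum>i<n. g i x * e i n x) = 0" by simp
  then show ?thesis by (simp add: lessThan_Suc_atMost[symmetric])
qed

lemma triangular_expansion:
  assumes E: "\<And>i. diff_op i (e i) (E i)"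
    and lead: "\<And>i. e i i = (\<lambda>_. \<sigma> i)" and \<sigma>: "\<And>i. \<sigma> i \<noteq> 0"
  shows "diff_op n c T \<Longrightarrow> \<exists>g. (\<forall>i. smooth (g i)) \<and> g n = (\<lambda>x. c n x / \<sigma> n) \<and>
    (\<forall>\<psi>. smooth \<psi> \<longrightarrow> T \<psi> = (\<lambda>x. \<Sum>i\<le>n. g i x * E i \<psi> x))"
proof (induction n arbitrary: c T)
  case 0
  have "E 0 \<psi> x = \<sigma> 0 * \<psi> x" if "smooth \<psi>" for \<psi> x
    using diff_op_apply[OF E that] lead by simp
  moreover have "T \<psi> x = c 0 x * \<psi> x" if "smooth \<psi>" for \<psi> x
    using diff_op_apply[OF "0" that] by simp
  ultimately show ?case using diff_op_smooth_coeff[OF "0"] \<sigma>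
    by (intro exI[of _ "\<lambda>_ x. c 0 x / \<sigma> 0"]) (auto intro: smooth_divide_const)
next
  case (Suc m)
  define h where "h x = c (Suc m) x / \<sigma> (Suc m)" for x
  have h: "smooth h" unfolding h_def using diff_op_smooth_coeff[OF Suc.prems] by (rule smooth_divide_const)
  have "diff_op (Suc m) (\<lambda>i x. c i x + - h x * e (Suc m) i x) (\<lambda>\<psi> x. T \<psi> x + - h x * E (Suc m) \<psi> x)"
    using h by (intro diff_op_add[OF Suc.prems] diff_op_mult[OF E]) auto
  moreover have "(\<lambda>x. c (Suc m) x + - h x * e (Suc m) (Suc m) x) = (\<lambda>_. 0)"
    using \<sigma> by (simp add: lead h_def)
  ultimately obtain g where g: "\<forall>i. smooth (g i)"
    and eq: "\<And>\<psi>. smooth \<psi> \<Longrightarrow> (\<lambda>x. T \<psi> x + - h x * E (Suc m) \<psi> x) = (\<lambda>x. \<Sum>i\<le>m. g i x * E i \<psi> x)"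
    using Suc.IH[OF diff_op_drop_top] by blast
  have "T \<psi> = (\<lambda>x. \<Sum>i\<le>Suc m. (g(Suc m := h)) i x * E i \<psi> x)" if "smooth \<psi>" for \<psi>
  proof
    fix x
    have "T \<psi> x = (\<Sum>i\<le>m. g i x * E i \<psi> x) + h x * E (Suc m) \<psi> x"
      using fun_cong[OF eq[OF that], of x] by simp
    then show "T \<psi> x = (\<Sum>i\<le>Suc m. (g(Suc m := h)) i x * E i \<psi> x)" by simp
  qed
  then show ?case using g h by (intro exI[of _ "g(Suc m := h)"]) (simp add: h_def)
qed

lemma triangular_coeffs_unique:
  assumes E: "\<And>i. diff_op i (e i) (E i)"
    and lead: "\<And>i. e i i = (\<lambda>_. \<sigma> i)" and \<sigma>: "\<And>i. \<sigma> i \<noteq> 0"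
    and vanish: "\<And>\<psi>. smooth \<psi> \<Longrightarrow> (\<Sum>i\<le>n. g i * E i \<psi> x0) = 0" and "i \<le> n"
  shows "g i = 0"
proof -
  have top: "g n = 0" if vanish: "\<And>\<psi>. smooth \<psi> \<Longrightarrow> (\<Sum>i\<le>n. g i * E i \<psi> x0) = 0" for n
  proof -
    have "(\<Sum>i\<le>n. g i * E i (taylor_monomial x0 n) x0) = (\<Sum>i\<le>n. if i = n then g n * \<sigma> n else 0)"
      by (rule sum.cong) (auto simp: diff_op_at_taylor_monomial[OF E] lead)
    then have "g n * \<sigma> n = 0" using vanish[OF smooth_taylor_monomial] by simp
    then show ?thesis using \<sigma> by simp
  qed
  have "\<forall>i\<le>n. g i = 0" if "\<And>\<psi>. smooth \<psi> \<Longrightarrow> (\<Sum>i\<le>n. g i * E i \<psi> x0) = 0" for n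
    using that
  proof (induction n)
    case 0 then show ?case using top[OF "0.prems"] by simp
  next
    case (Suc n)
    have "g (Suc n) = 0" by (rule top) (rule Suc.prems)
    then have "\<forall>i\<le>n. g i = 0" using Suc.prems by (intro Suc.IH) simp
    then show ?case using \<open>g (Suc n) = 0\<close> le_Suc_eq by auto
  qed
  from this[OF vanish] show ?thesis using \<open>i \<le> n\<close> by blast
qed

section \<open>Expansions in powers of -L\<close>

lemma smooth_schrL: "smooth V \<Longrightarrow> smooth \<psi> \<Longrightarrow> smooth (schrL V \<psi>)"
  unfolding schrL_def by (auto intro!: smooth_add smooth_mult smooth_Dn)

lemma schrL_cmult: "smooth f \<Longrightarrow> schrL V (\<lambda>x. s * f x) = (\<lambda>x. s * schrL V f x)"
  by (simp add: schrL_def Dn_cmult algebra_simps)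

definition negL :: "(real \<Rightarrow> real) \<Rightarrow> (real \<Rightarrow> real) \<Rightarrow> real \<Rightarrow> real" where
  "negL V \<psi> = (\<lambda>x. - schrL V \<psi> x)"

definition negL_pow :: "(real \<Rightarrow> real) \<Rightarrow> nat \<Rightarrow> (real \<Rightarrow> real) \<Rightarrow> real \<Rightarrow> real" where
  "negL_pow V k = negL V ^^ k"

lemma negL_pow_Suc: "negL_pow V (Suc k) \<psi> = negL V (negL_pow V k \<psi>)"
  by (simp add: negL_pow_def)

lemma negL_pow_negL: "negL_pow V k (negL V \<psi>) = negL V (negL_pow V k \<psi>)"
  by (simp add: negL_pow_def funpow_swap1)

lemma diff_op_negL:
  assumes V: "smooth V" and T: "diff_op n c T"
  shows "\<exists>d. diff_op (Suc (Suc n)) d (\<lambda>\<psi>. negL V (T \<psi>)) \<and> d (Suc (Suc n)) = (\<lambda>x. - c n x)"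
proof -
  have D2: "diff_op (Suc (Suc n))
      (\<lambda>i x. deriv (\<lambda>x. deriv (c i) x + (case i of 0 \<Rightarrow> 0 | Suc j \<Rightarrow> c j x)) x
        + (case i of 0 \<Rightarrow> 0 | Suc j \<Rightarrow> deriv (c j) x + (case j of 0 \<Rightarrow> 0 | Suc j \<Rightarrow> c j x)))
      (\<lambda>\<psi>. deriv (deriv (T \<psi>)))"
    using diff_op_deriv[OF diff_op_deriv[OF T]] .
  have VT: "diff_op (Suc (Suc n)) (\<lambda>i x. V x * c i x) (\<lambda>\<psi> x. V x * T \<psi> x)"
    by (rule diff_op_mono[OF diff_op_mult[OF T V]]) simp
  obtain d where d: "diff_op (Suc (Suc n)) d (\<lambda>\<psi> x. - 1 * (deriv (deriv (T \<psi>)) x + V x * T \<psi> x))"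
    and top: "d (Suc (Suc n)) = (\<lambda>x. - c n x)"
    by (rule that[OF diff_op_cmult[OF diff_op_add[OF D2 VT], of "-1"]])
      (use diff_op_coeff_above[OF T, of "Suc n"] diff_op_coeff_above[OF T, of "Suc (Suc n)"] in auto)
  have "diff_op (Suc (Suc n)) d (\<lambda>\<psi>. negL V (T \<psi>))"
    by (rule diff_op_cong[OF d]) (simp add: negL_def schrL_def Dn_2)
  then show ?thesis using top by blast
qed

lemma diff_op_negL_pow:
  assumes "smooth V"
  shows "\<exists>c. diff_op (2 * k) c (negL_pow V k) \<and> c (2 * k) = (\<lambda>_. (-1) ^ k)"
proof (induction k)
  case 0 then show ?case using diff_op_id by (auto simp: negL_pow_def)
next
  case (Suc k)
  then obtain c where c: "diff_op (2 * k) c (negL_pow V k)" "c (2 * k) = (\<lambda>_. (-1) ^ k)" by blast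
  obtain d where "diff_op (Suc (Suc (2 * k))) d (\<lambda>\<psi>. negL V (negL_pow V k \<psi>))"
    "d (Suc (Suc (2 * k))) = (\<lambda>x. - c (2 * k) x)"
    using diff_op_negL[OF assms c(1)] by blast
  then show ?case using c(2) by (intro exI[of _ d]) (auto simp: negL_pow_Suc[abs_def])
qed

lemma smooth_negL_pow: "smooth V \<Longrightarrow> smooth \<psi> \<Longrightarrow> smooth (negL_pow V k \<psi>)"
  using diff_op_negL_pow diff_op_smooth by blast

definition negL_basis :: "(real \<Rightarrow> real) \<Rightarrow> nat \<Rightarrow> (real \<Rightarrow> real) \<Rightarrow> real \<Rightarrow> real" where
  "negL_basis V i = (if even i then negL_pow V (i div 2) else (\<lambda>\<psi>. deriv (negL_pow V (i div 2) \<psi>)))"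

lemma negL_basis_triangular:
  assumes "smooth V"
  obtains e where "\<And>i. diff_op i (e i) (negL_basis V i)" "\<And>i. e i i = (\<lambda>_. (-1) ^ (i div 2))"
proof -
  have "\<exists>c. diff_op i c (negL_basis V i) \<and> c i = (\<lambda>_. (-1) ^ (i div 2))" for i
  proof (cases "even i")
    case True then show ?thesis
      using diff_op_negL_pow[OF assms, of "i div 2"] by (simp add: negL_basis_def)
  next
    case False
    define k where "k = i div 2"
    have i: "i = Suc (2 * k)" using False by (simp add: k_def)
    obtain c where c: "diff_op (2 * k) c (negL_pow V k)" "c (2 * k) = (\<lambda>_. (-1) ^ k)"
      using diff_op_negL_pow[OF assms] by blast
    have "(\<lambda>x. deriv (c (Suc (2 * k))) x + (case Suc (2 * k) of 0 \<Rightarrow> 0 | Suc j \<Rightarrow> c j x)) = (\<lambda>_. (-1) ^ k)"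
      using diff_op_coeff_above[OF c(1), of "Suc (2 * k)"] c(2) by simp
    then have "\<exists>c. diff_op (Suc (2 * k)) c (negL_basis V (Suc (2 * k))) \<and>
        c (Suc (2 * k)) = (\<lambda>_. (-1) ^ (Suc (2 * k) div 2))"
      using diff_op_deriv[OF c(1)] by (auto simp: negL_basis_def)
    then show ?thesis by (simp only: i)
  qed
  then show thesis using that by metis
qed

definition Lpoly :: "(real \<Rightarrow> real) \<Rightarrow> nat \<Rightarrow> (nat \<Rightarrow> real \<Rightarrow> real) \<Rightarrow> (nat \<Rightarrow> real \<Rightarrow> real)
    \<Rightarrow> (real \<Rightarrow> real) \<Rightarrow> real \<Rightarrow> real" where
  "Lpoly V M a b \<psi> = (\<lambda>x. \<Sum>k\<le>M. a k x * deriv (negL_pow V k \<psi>) x + b k x * negL_pow V k \<psi> x)"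

lemma Lpoly_eq_basis_sum:
  "Lpoly V M a b \<psi> x
    = (\<Sum>i\<le>Suc (2 * M). (if even i then b (i div 2) else a (i div 2)) x * negL_basis V i \<psi> x)"
  unfolding Lpoly_def negL_basis_def sum.in_pairs_0 by (simp add: add.commute)

lemma diff_op_Lpoly:
  assumes V: "smooth V" and ab: "\<And>k. smooth (a k) \<and> smooth (b k)"
  shows "\<exists>c. diff_op (Suc (2 * M)) c (Lpoly V M a b) \<and> c (Suc (2 * M)) = (\<lambda>x. (-1) ^ M * a M x)"
proof -
  obtain e where E: "\<And>i. diff_op i (e i) (negL_basis V i)" and lead: "\<And>i. e i i = (\<lambda>_. (-1) ^ (i div 2))"
    using negL_basis_triangular[OF V] by blast
  define g where "g i = (if even i then b (i div 2) else a (i div 2))" for i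
  have "diff_op (Suc (2 * M)) (\<lambda>j x. \<Sum>i\<le>Suc (2 * M). g i x * e i j x)
      (\<lambda>\<psi> x. \<Sum>i\<le>Suc (2 * M). g i x * negL_basis V i \<psi> x)"
    by (rule diff_op_triangular_sum[OF E]) (use ab in \<open>simp add: g_def\<close>)
  then have "diff_op (Suc (2 * M)) (\<lambda>j x. \<Sum>i\<le>Suc (2 * M). g i x * e i j x) (Lpoly V M a b)"
    by (rule diff_op_cong) (simp add: fun_eq_iff Lpoly_eq_basis_sum g_def)
  moreover have "(\<Sum>i\<le>Suc (2 * M). g i x * e i (Suc (2 * M)) x) = (-1) ^ M * a M x" for x
    by (subst triangular_sum_top_coeff[OF E]) (simp add: lead g_def)
  ultimately show ?thesis by blast
qed

lemma diff_op_eq_Lpoly: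
  assumes V: "smooth V" and T: "diff_op (Suc (2 * N)) c T"
  shows "\<exists>a b. (\<forall>k. smooth (a k) \<and> smooth (b k)) \<and> (\<forall>k>N. a k = (\<lambda>_. 0) \<and> b k = (\<lambda>_. 0)) \<and>
    a N = (\<lambda>x. (-1) ^ N * c (Suc (2 * N)) x) \<and> (\<forall>\<psi>. smooth \<psi> \<longrightarrow> T \<psi> = Lpoly V N a b \<psi>)"
proof -
  obtain e where E: "\<And>i. diff_op i (e i) (negL_basis V i)" and lead: "\<And>i. e i i = (\<lambda>_. (-1) ^ (i div 2))"
    using negL_basis_triangular[OF V] by blast
  obtain g where g: "\<forall>i. smooth (g i)" "g (Suc (2 * N)) = (\<lambda>x. c (Suc (2 * N)) x / (-1) ^ N)"
    and expansion: "\<forall>\<psi>. smooth \<psi> \<longrightarrow> T \<psi> = (\<lambda>x. \<Sum>i\<le>Suc (2 * N). g i x * negL_basis V i \<psi> x)"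
    using triangular_expansion[OF E lead _ T] by auto
  define a where "a k = (if k \<le> N then g (Suc (2 * k)) else (\<lambda>_. 0))" for k
  define b where "b k = (if k \<le> N then g (2 * k) else (\<lambda>_. 0))" for k
  have "g i = (if even i then b (i div 2) else a (i div 2))" if "i \<le> Suc (2 * N)" for i
    using that by (auto simp: a_def b_def elim: oddE)
  then have "T \<psi> = Lpoly V N a b \<psi>" if "smooth \<psi>" for \<psi>
    using expansion that by (auto simp: Lpoly_eq_basis_sum[abs_def] intro!: sum.cong)
  moreover have "a N = (\<lambda>x. (-1) ^ N * c (Suc (2 * N)) x)"
    using g(2) by (cases "even N") (auto simp: a_def)
  moreover have "\<forall>k. smooth (a k) \<and> smooth (b k)" "\<forall>k>N. a k = (\<lambda>_. 0) \<and> b k = (\<lambda>_. 0)"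
    using g(1) by (auto simp: a_def b_def)
  ultimately show ?thesis by blast
qed

lemma Lpoly_coeffs_unique:
  assumes V: "smooth V" and vanish: "\<And>\<psi>. smooth \<psi> \<Longrightarrow> Lpoly V M a b \<psi> x0 = 0" and "k \<le> M"
  shows "a k x0 = 0 \<and> b k x0 = 0"
proof -
  obtain e where E: "\<And>i. diff_op i (e i) (negL_basis V i)" and lead: "\<And>i. e i i = (\<lambda>_. (-1) ^ (i div 2))"
    using negL_basis_triangular[OF V] by blast
  define g where "g i = (if even i then b (i div 2) else a (i div 2)) x0" for i
  have basis_sum: "(\<Sum>i\<le>Suc (2 * M). g i * negL_basis V i \<psi> x0) = 0" if "smooth \<psi>" for \<psi>
    using vanish[OF that] by (simp add: g_def Lpoly_eq_basis_sum)
  have "g i = 0" if "i \<le> Suc (2 * M)" for i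
    by (rule triangular_coeffs_unique[OF E lead _ basis_sum that]) simp
  from this[of "2 * k"] this[of "Suc (2 * k)"] show ?thesis using \<open>k \<le> M\<close> by (simp add: g_def)
qed

section \<open>Commutators with L\<close>

lemma schrL_first_order_commutator:
  assumes a: "smooth a" and b: "smooth b" and \<phi>: "smooth \<phi>" and V: "smooth V"
  shows "schrL V (\<lambda>x. a x * deriv \<phi> x + b x * \<phi> x) x - (a x * deriv (schrL V \<phi>) x + b x * schrL V \<phi> x)
    = 2 * deriv a x * schrL V \<phi> x + (deriv (deriv a) x + 2 * deriv b x) * deriv \<phi> x
      + (deriv (deriv b) x - a x * deriv V x - 2 * deriv a x * V x) * \<phi> x"
proof -
  note smooth_facts = smooth_deriv_simps a b \<phi> V
  have "deriv (\<lambda>x. a x * deriv \<phi> x + b x * \<phi> x)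
      = (\<lambda>x. a x * deriv (deriv \<phi>) x + deriv a x * deriv \<phi> x + (b x * deriv \<phi> x + deriv b x * \<phi> x))"
    by (rule ext) (simp add: smooth_facts)
  then have "deriv (deriv (\<lambda>x. a x * deriv \<phi> x + b x * \<phi> x)) x
      = a x * deriv (deriv (deriv \<phi>)) x + 2 * deriv a x * deriv (deriv \<phi>) x + deriv (deriv a) x * deriv \<phi> x
        + b x * deriv (deriv \<phi>) x + 2 * deriv b x * deriv \<phi> x + deriv (deriv b) x * \<phi> x"
    by (simp add: smooth_facts algebra_simps)
  moreover have "deriv (schrL V \<phi>) x = deriv (deriv (deriv \<phi>)) x + V x * deriv \<phi> x + deriv V x * \<phi> x"
    unfolding schrL_def Dn_2 by (simp add: smooth_facts)
  ultimately show ?thesis by (simp add: schrL_def Dn_2 algebra_simps)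
qed

lemma negL_first_order_commutator:
  assumes "smooth a" "smooth b" "smooth \<phi>" "smooth V"
  shows "negL V (\<lambda>x. a x * deriv \<phi> x + b x * \<phi> x) x - (a x * deriv (negL V \<phi>) x + b x * negL V \<phi> x)
    = 2 * deriv a x * negL V \<phi> x - (deriv (deriv a) x + 2 * deriv b x) * deriv \<phi> x
      - (deriv (deriv b) x - a x * deriv V x - 2 * deriv a x * V x) * \<phi> x"
proof -
  have "deriv (negL V \<phi>) x = - deriv (schrL V \<phi>) x"
    unfolding negL_def using smooth_schrL assms by (simp add: smooth_field_differentiable)
  then show ?thesis
    using schrL_first_order_commutator[OF assms, of x] by (simp add: negL_def algebra_simps)
qed

lemma negL_sum:
  assumes "\<And>k. smooth (f k)"
  shows "negL V (\<lambda>x. \<Sum>k\<in>S. f k x) x = (\<Sum>k\<in>S. negL V (f k) x)"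
proof -
  have "deriv (\<lambda>x. \<Sum>k\<in>S. f k x) = (\<lambda>x. \<Sum>k\<in>S. deriv (f k) x)"
    using assms by (intro ext) (simp add: smooth_field_differentiable)
  then have "deriv (deriv (\<lambda>x. \<Sum>k\<in>S. f k x)) = (\<lambda>x. \<Sum>k\<in>S. deriv (deriv (f k)) x)"
    using assms by (intro ext) (simp add: smooth_field_differentiable smooth_deriv)
  then show ?thesis by (simp add: negL_def schrL_def Dn_2 sum_subtractf sum_distrib_left sum_negf)
qed

lemma Lpoly_commutator:
  assumes V: "smooth V" and ab: "\<And>k. smooth (a k) \<and> smooth (b k)" and \<psi>: "smooth \<psi>"
    and top: "a (Suc M) = (\<lambda>_. 0)" "b (Suc M) = (\<lambda>_. 0)"
  shows "negL V (Lpoly V M a b \<psi>) x - Lpoly V M a b (negL V \<psi>) x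
    = Lpoly V (Suc M) (\<lambda>k x. - (deriv (deriv (a k)) x + 2 * deriv (b k) x))
        (\<lambda>k x. (case k of 0 \<Rightarrow> 0 | Suc j \<Rightarrow> 2 * deriv (a j) x)
          - (deriv (deriv (b k)) x - a k x * deriv V x - 2 * deriv (a k) x * V x)) \<psi> x"
proof -
  have P: "smooth (negL_pow V k \<psi>)" for k using smooth_negL_pow[OF V \<psi>] .
  have "negL V (Lpoly V M a b \<psi>) x
      = (\<Sum>k\<le>M. negL V (\<lambda>x. a k x * deriv (negL_pow V k \<psi>) x + b k x * negL_pow V k \<psi> x) x)"
    unfolding Lpoly_def using ab P by (intro negL_sum) (auto simp: smooth_deriv_simps)
  moreover have "Lpoly V M a b (negL V \<psi>) x
      = (\<Sum>k\<le>M. a k x * deriv (negL V (negL_pow V k \<psi>)) x + b k x * negL V (negL_pow V k \<psi>) x)"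
    by (simp add: Lpoly_def negL_pow_negL)
  ultimately have "negL V (Lpoly V M a b \<psi>) x - Lpoly V M a b (negL V \<psi>) x
      = (\<Sum>k\<le>M. 2 * deriv (a k) x * negL_pow V (Suc k) \<psi> x
          - (deriv (deriv (a k)) x + 2 * deriv (b k) x) * deriv (negL_pow V k \<psi>) x
          - (deriv (deriv (b k)) x - a k x * deriv V x - 2 * deriv (a k) x * V x) * negL_pow V k \<psi> x)"
    using negL_first_order_commutator[OF _ _ P V] ab
    by (simp add: sum_subtractf[symmetric] negL_pow_Suc)
  also have "\<dots> = (\<Sum>k\<le>Suc M. (case k of 0 \<Rightarrow> 0 | Suc j \<Rightarrow> 2 * deriv (a j) x) * negL_pow V k \<psi> x)
      + (\<Sum>k\<le>Suc M. - (deriv (deriv (a k)) x + 2 * deriv (b k) x) * deriv (negL_pow V k \<psi>) x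
          - (deriv (deriv (b k)) x - a k x * deriv V x - 2 * deriv (a k) x * V x) * negL_pow V k \<psi> x)"
    using top by (subst sum.atMost_Suc_shift) (simp add: sum.distrib[symmetric] algebra_simps)
  finally show ?thesis by (simp add: Lpoly_def sum.distrib[symmetric] algebra_simps)
qed

definition commutes_with_schrL :: "(real \<Rightarrow> real) \<Rightarrow> ((real \<Rightarrow> real) \<Rightarrow> real \<Rightarrow> real) \<Rightarrow> bool" where
  "commutes_with_schrL V T \<longleftrightarrow> (\<forall>\<psi>. smooth \<psi> \<longrightarrow> T (schrL V \<psi>) = schrL V (T \<psi>))"

lemma commutes_with_schrL_iff_negL:
  assumes V: "smooth V" and T: "diff_op n c T"
  shows "commutes_with_schrL V T \<longleftrightarrow> (\<forall>\<psi>. smooth \<psi> \<longrightarrow> T (negL V \<psi>) = negL V (T \<psi>))"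
proof -
  have "T (negL V \<psi>) = (\<lambda>x. - T (schrL V \<psi>) x)" if "smooth \<psi>" for \<psi>
    using diff_op_scale_arg[OF T smooth_schrL[OF V that], of "-1"] by (simp add: negL_def)
  then show ?thesis unfolding commutes_with_schrL_def by (auto simp: negL_def fun_eq_iff)
qed

lemma commutes_with_schrL_scale:
  assumes V: "smooth V" and S: "diff_op n c S" and "s \<noteq> 0"
    and T: "\<And>\<psi>. smooth \<psi> \<Longrightarrow> T \<psi> = (\<lambda>x. s * S \<psi> x)"
  shows "commutes_with_schrL V T \<longleftrightarrow> commutes_with_schrL V S"
proof -
  have "T (schrL V \<psi>) = schrL V (T \<psi>) \<longleftrightarrow> S (schrL V \<psi>) = schrL V (S \<psi>)" if "smooth \<psi>" for \<psi>
  proof -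
    have "T (schrL V \<psi>) = (\<lambda>x. s * S (schrL V \<psi>) x)" using T smooth_schrL[OF V that] by blast
    moreover have "schrL V (T \<psi>) = (\<lambda>x. s * schrL V (S \<psi>) x)"
      using T[OF that] schrL_cmult[OF diff_op_smooth[OF S that]] by simp
    ultimately show ?thesis using \<open>s \<noteq> 0\<close> by (simp add: fun_eq_iff)
  qed
  then show ?thesis unfolding commutes_with_schrL_def by blast
qed

definition symmetry_recursion ::
    "(real \<Rightarrow> real) \<Rightarrow> (nat \<Rightarrow> real \<Rightarrow> real) \<Rightarrow> (nat \<Rightarrow> real \<Rightarrow> real) \<Rightarrow> bool" where
  "symmetry_recursion V a b \<longleftrightarrow> (\<forall>k x. deriv (deriv (a k)) x + 2 * deriv (b k) x = 0 \<and>
     deriv (deriv (b k)) x - a k x * deriv V x - 2 * deriv (a k) x * V x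
       = (case k of 0 \<Rightarrow> 0 | Suc j \<Rightarrow> 2 * deriv (a j) x))"

lemma Lpoly_commutes_iff_recursion:
  assumes V: "smooth V" and ab: "\<And>k. smooth (a k) \<and> smooth (b k)"
    and above: "\<And>k. M < k \<Longrightarrow> a k = (\<lambda>_. 0) \<and> b k = (\<lambda>_. 0)"
  shows "commutes_with_schrL V (Lpoly V M a b) \<longleftrightarrow> symmetry_recursion V a b"
proof -
  define A where "A k x = - (deriv (deriv (a k)) x + 2 * deriv (b k) x)" for k x
  define B where "B k x = (case k of 0 \<Rightarrow> 0 | Suc j \<Rightarrow> 2 * deriv (a j) x)
    - (deriv (deriv (b k)) x - a k x * deriv V x - 2 * deriv (a k) x * V x)" for k x
  obtain c where c: "diff_op (Suc (2 * M)) c (Lpoly V M a b)"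
    using diff_op_Lpoly[where a = a and b = b, OF V ab] by blast
  have comm: "negL V (Lpoly V M a b \<psi>) x - Lpoly V M a b (negL V \<psi>) x = Lpoly V (Suc M) A B \<psi> x"
    if "smooth \<psi>" for \<psi> x
    unfolding A_def B_def using above[of "Suc M"] by (intro Lpoly_commutator[OF V ab that]) auto
  have "symmetry_recursion V a b \<longleftrightarrow> (\<forall>k x. A k x = 0 \<and> B k x = 0)"
  proof -
    have "(A k x = 0 \<and> B k x = 0) \<longleftrightarrow> deriv (deriv (a k)) x + 2 * deriv (b k) x = 0 \<and>
        deriv (deriv (b k)) x - a k x * deriv V x - 2 * deriv (a k) x * V x
          = (case k of 0 \<Rightarrow> 0 | Suc j \<Rightarrow> 2 * deriv (a j) x)" for k x
      unfolding A_def B_def by linarith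
    then show ?thesis by (simp add: symmetry_recursion_def)
  qed
  also have "\<dots> \<longleftrightarrow> (\<forall>k\<le>Suc M. \<forall>x. A k x = 0 \<and> B k x = 0)"
  proof -
    have "A k x = 0 \<and> B k x = 0" if "Suc M < k" for k x
      using that above[of k] above[of "k - 1"] by (cases k) (auto simp: A_def B_def)
    then show ?thesis using not_le by blast
  qed
  also have "\<dots> \<longleftrightarrow> (\<forall>\<psi>. smooth \<psi> \<longrightarrow> (\<forall>x. Lpoly V (Suc M) A B \<psi> x = 0))"
  proof
    assume "\<forall>\<psi>. smooth \<psi> \<longrightarrow> (\<forall>x. Lpoly V (Suc M) A B \<psi> x = 0)"
    then show "\<forall>k\<le>Suc M. \<forall>x. A k x = 0 \<and> B k x = 0"
      using Lpoly_coeffs_unique[OF V, of "Suc M" A B] by blast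
  qed (simp add: Lpoly_def)
  also have "\<dots> \<longleftrightarrow> commutes_with_schrL V (Lpoly V M a b)"
    unfolding commutes_with_schrL_iff_negL[OF V c] using comm by (auto simp: fun_eq_iff)
  finally show ?thesis by simp
qed

section \<open>First-order symmetries of L + \<epsilon>\<close>

lemma schrL_taylor_monomial_at_center:
  "schrL V (taylor_monomial x0 m) x0 = (if m = 2 then 1 else 0) + (if m = 0 then V x0 else 0)"
  using Dn_taylor_monomial_at_center[of 2 x0 m] Dn_taylor_monomial_at_center[of 0 x0 m]
  by (simp add: schrL_def)

definition lie_symmetry ::
    "(real \<Rightarrow> real) \<Rightarrow> real \<Rightarrow> ((real \<Rightarrow> real) \<Rightarrow> real \<Rightarrow> real) \<Rightarrow> (real \<Rightarrow> real) \<Rightarrow> bool" where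
  "lie_symmetry V \<epsilon> Q r \<longleftrightarrow> (\<forall>\<psi>. smooth \<psi> \<longrightarrow>
     (\<lambda>x. schrL V (Q \<psi>) x + \<epsilon> * Q \<psi> x) - Q (\<lambda>x. schrL V \<psi> x + \<epsilon> * \<psi> x)
       = (\<lambda>x. r x * (schrL V \<psi> x + \<epsilon> * \<psi> x)))"

lemma first_order_symmetry_iff:
  assumes V: "smooth V" and A: "smooth A" and B: "smooth B"
    and Q: "\<And>g. Q g = (\<lambda>x. A x * deriv g x + B x * g x)"
  shows "lie_symmetry V \<epsilon> Q r \<longleftrightarrow> (\<forall>x. deriv (deriv A) x + 2 * deriv B x = 0 \<and>
      deriv (deriv B) x - A x * deriv V x - 2 * deriv A x * V x = 2 * \<epsilon> * deriv A x \<and>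
      r x = 2 * deriv A x)"
proof -
  have commutator: "((\<lambda>x. schrL V (Q \<psi>) x + \<epsilon> * Q \<psi> x) - Q (\<lambda>x. schrL V \<psi> x + \<epsilon> * \<psi> x)) x
      = 2 * deriv A x * schrL V \<psi> x + (deriv (deriv A) x + 2 * deriv B x) * deriv \<psi> x
        + (deriv (deriv B) x - A x * deriv V x - 2 * deriv A x * V x) * \<psi> x"
    if \<psi>: "smooth \<psi>" for \<psi> x
  proof -
    have "deriv (\<lambda>x. schrL V \<psi> x + \<epsilon> * \<psi> x) x = deriv (schrL V \<psi>) x + \<epsilon> * deriv \<psi> x"
      using smooth_schrL[OF V \<psi>] \<psi> by (simp add: smooth_deriv_simps)
    then show ?thesis
      using schrL_first_order_commutator[OF A B \<psi> V, of x] by (simp add: Q algebra_simps)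
  qed
  show ?thesis
  proof
    assume symmetry: "lie_symmetry V \<epsilon> Q r"
    show "\<forall>x. deriv (deriv A) x + 2 * deriv B x = 0 \<and>
      deriv (deriv B) x - A x * deriv V x - 2 * deriv A x * V x = 2 * \<epsilon> * deriv A x \<and>
      r x = 2 * deriv A x"
    proof
      fix x0
      have at_monomial: "2 * deriv A x0 * schrL V (taylor_monomial x0 m) x0
          + (deriv (deriv A) x0 + 2 * deriv B x0) * deriv (taylor_monomial x0 m) x0
          + (deriv (deriv B) x0 - A x0 * deriv V x0 - 2 * deriv A x0 * V x0) * taylor_monomial x0 m x0
        = r x0 * (schrL V (taylor_monomial x0 m) x0 + \<epsilon> * taylor_monomial x0 m x0)" for m
        using symmetry smooth_taylor_monomial[of x0 m] unfolding lie_symmetry_def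
        by (auto simp flip: commutator[OF smooth_taylor_monomial] dest: fun_cong[of _ _ x0])
      have monomial_values: "taylor_monomial x0 m x0 = (if m = 0 then 1 else 0)"
          "deriv (taylor_monomial x0 m) x0 = (if m = 1 then 1 else 0)" for m
        using Dn_taylor_monomial_at_center[of 0 x0 m] Dn_taylor_monomial_at_center[of 1 x0 m]
        by (auto simp: Dn_Suc)
      show "deriv (deriv A) x0 + 2 * deriv B x0 = 0 \<and>
        deriv (deriv B) x0 - A x0 * deriv V x0 - 2 * deriv A x0 * V x0 = 2 * \<epsilon> * deriv A x0 \<and>
        r x0 = 2 * deriv A x0"
        using at_monomial[of 0] at_monomial[of 1] at_monomial[of 2]
        by (simp add: monomial_values schrL_taylor_monomial_at_center algebra_simps)
    qed
  next
    assume equations: "\<forall>x. deriv (deriv A) x + 2 * deriv B x = 0 \<and>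
      deriv (deriv B) x - A x * deriv V x - 2 * deriv A x * V x = 2 * \<epsilon> * deriv A x \<and>
      r x = 2 * deriv A x"
    show "lie_symmetry V \<epsilon> Q r"
      unfolding lie_symmetry_def
    proof (intro allI impI ext)
      fix \<psi> x assume "smooth \<psi>"
      show "((\<lambda>x. schrL V (Q \<psi>) x + \<epsilon> * Q \<psi> x) - Q (\<lambda>x. schrL V \<psi> x + \<epsilon> * \<psi> x)) x
        = r x * (schrL V \<psi> x + \<epsilon> * \<psi> x)"
        unfolding commutator[OF \<open>smooth \<psi>\<close>] using equations[rule_format, of x]
        by (simp add: algebra_simps)
    qed
  qed
qed

lemma symmetry_recursion_iff_polynomial_identities:
  assumes above: "\<And>k. N < k \<Longrightarrow> a k = (\<lambda>_. 0) \<and> b k = (\<lambda>_. 0)"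
  shows "symmetry_recursion V a b \<longleftrightarrow> (\<forall>e x.
    (\<Sum>j\<le>N. (deriv (deriv (a j)) x + 2 * deriv (b j) x) * e ^ j) = 0 \<and>
    (\<Sum>j\<le>N. (deriv (deriv (b j)) x - a j x * deriv V x - 2 * deriv (a j) x * V x) * e ^ j)
      = 2 * e * (\<Sum>j\<le>N. deriv (a j) x * e ^ j))"
proof -
  have "(\<forall>k. deriv (deriv (a k)) x + 2 * deriv (b k) x = 0 \<and>
      deriv (deriv (b k)) x - a k x * deriv V x - 2 * deriv (a k) x * V x
        = (case k of 0 \<Rightarrow> 0 | Suc j \<Rightarrow> 2 * deriv (a j) x))
    \<longleftrightarrow> (\<forall>e. (\<Sum>j\<le>N. (deriv (deriv (a j)) x + 2 * deriv (b j) x) * e ^ j) = 0) \<and>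
      (\<forall>e. (\<Sum>j\<le>N. (deriv (deriv (b j)) x - a j x * deriv V x - 2 * deriv (a j) x * V x) * e ^ j)
        = 2 * e * (\<Sum>j\<le>N. deriv (a j) x * e ^ j))" for x
  proof -
    define c where "c k = deriv (deriv (b k)) x - a k x * deriv V x - 2 * deriv (a k) x * V x" for k
    define s where "s k = (case k of 0 \<Rightarrow> 0 | Suc j \<Rightarrow> 2 * deriv (a j) x)" for k
    have high: "deriv (deriv (a k)) x + 2 * deriv (b k) x = 0" "c k = 0" if "N < k" for k
      using above[OF that] by (simp_all add: c_def)
    have "s k = 0" if "Suc N < k" for k
      using that above[of "k - 1"] by (cases k) (auto simp: s_def)
    then have recursion_tail: "c k = s k" if "Suc N < k" for k
      using high(2)[of k] that by simp
    have lhs: "(\<Sum>j\<le>N. c j * e ^ j) = (\<Sum>j\<le>Suc N. c j * e ^ j)" for e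
      using high(2)[of "Suc N"] by simp
    have rhs: "2 * e * (\<Sum>j\<le>N. deriv (a j) x * e ^ j) = (\<Sum>j\<le>Suc N. s j * e ^ j)" for e
      by (simp add: sum.atMost_Suc_shift s_def sum_distrib_left algebra_simps del: sum.atMost_Suc)
    have "(\<forall>e. (\<Sum>j\<le>N. c j * e ^ j) = 2 * e * (\<Sum>j\<le>N. deriv (a j) x * e ^ j))
        \<longleftrightarrow> (\<forall>k\<le>Suc N. c k = s k)"
      unfolding lhs rhs by (rule polyfun_eq_coeffs)
    moreover have "(\<forall>e. (\<Sum>j\<le>N. (deriv (deriv (a j)) x + 2 * deriv (b j) x) * e ^ j) = 0)
        \<longleftrightarrow> (\<forall>k\<le>N. deriv (deriv (a k)) x + 2 * deriv (b k) x = 0)"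
      by (rule polyfun_eq_0)
    ultimately show ?thesis
      using high(1) recursion_tail unfolding c_def[symmetric] s_def[symmetric]
      by (meson le_less_linear not_less_eq)
  qed
  then show ?thesis unfolding symmetry_recursion_def by blast
qed

lemma opQhat_symmetry_iff_recursion:
  assumes V: "smooth V" and ab: "\<And>k. smooth (a k) \<and> smooth (b k)"
    and above: "\<And>k. N < k \<Longrightarrow> a k = (\<lambda>_. 0) \<and> b k = (\<lambda>_. 0)"
  shows "(\<exists>r. \<forall>\<epsilon>. lie_symmetry V \<epsilon> (opQhat N a b \<epsilon>) (\<lambda>x. r x \<epsilon>)) \<longleftrightarrow> symmetry_recursion V a b"
proof -
  define A where "A \<epsilon> x = (\<Sum>j\<le>N. a j x * \<epsilon> ^ j)" for \<epsilon> x :: real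
  define B where "B \<epsilon> x = (\<Sum>j\<le>N. b j x * \<epsilon> ^ j)" for \<epsilon> x :: real
  define identities where "identities \<epsilon> x \<longleftrightarrow>
    (\<Sum>j\<le>N. (deriv (deriv (a j)) x + 2 * deriv (b j) x) * \<epsilon> ^ j) = 0 \<and>
    (\<Sum>j\<le>N. (deriv (deriv (b j)) x - a j x * deriv V x - 2 * deriv (a j) x * V x) * \<epsilon> ^ j)
      = 2 * \<epsilon> * (\<Sum>j\<le>N. deriv (a j) x * \<epsilon> ^ j)" for \<epsilon> x :: real
  have smooth_AB: "smooth (A \<epsilon>)" "smooth (B \<epsilon>)" for \<epsilon>
    unfolding A_def B_def using ab by (auto intro!: smooth_sum smooth_mult)
  have dA: "deriv (A \<epsilon>) = (\<lambda>x. \<Sum>j\<le>N. deriv (a j) x * \<epsilon> ^ j)"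
    and dB: "deriv (B \<epsilon>) = (\<lambda>x. \<Sum>j\<le>N. deriv (b j) x * \<epsilon> ^ j)"
    and ddA: "deriv (\<lambda>x. \<Sum>j\<le>N. deriv (a j) x * \<epsilon> ^ j) = (\<lambda>x. \<Sum>j\<le>N. deriv (deriv (a j)) x * \<epsilon> ^ j)"
    and ddB: "deriv (\<lambda>x. \<Sum>j\<le>N. deriv (b j) x * \<epsilon> ^ j) = (\<lambda>x. \<Sum>j\<le>N. deriv (deriv (b j)) x * \<epsilon> ^ j)"
    for \<epsilon>
    unfolding A_def B_def using ab by (simp_all add: deriv_polynomial smooth_deriv)
  have determining_equations:
    "lie_symmetry V \<epsilon> (opQhat N a b \<epsilon>) r \<longleftrightarrow> (\<forall>x. identities \<epsilon> x \<and> r x = 2 * deriv (A \<epsilon>) x)"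
    for \<epsilon> r
  proof -
    have "opQhat N a b \<epsilon> g = (\<lambda>x. A \<epsilon> x * deriv g x + B \<epsilon> x * g x)" for g
      by (simp add: opQhat_def A_def B_def)
    from first_order_symmetry_iff[OF V smooth_AB this] show ?thesis
      unfolding identities_def dA dB ddA ddB
      by (simp add: A_def sum.distrib sum_subtractf sum_distrib_left sum_distrib_right algebra_simps)
  qed
  have "(\<exists>r. \<forall>\<epsilon>. lie_symmetry V \<epsilon> (opQhat N a b \<epsilon>) (\<lambda>x. r x \<epsilon>)) \<longleftrightarrow> (\<forall>\<epsilon> x. identities \<epsilon> x)"
  proof
    assume "\<exists>r. \<forall>\<epsilon>. lie_symmetry V \<epsilon> (opQhat N a b \<epsilon>) (\<lambda>x. r x \<epsilon>)"
    then show "\<forall>\<epsilon> x. identities \<epsilon> x" using determining_equations by blast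
  next
    assume "\<forall>\<epsilon> x. identities \<epsilon> x"
    then have "\<forall>\<epsilon>. lie_symmetry V \<epsilon> (opQhat N a b \<epsilon>) (\<lambda>x. 2 * deriv (A \<epsilon>) x)"
      using determining_equations by blast
    then show "\<exists>r. \<forall>\<epsilon>. lie_symmetry V \<epsilon> (opQhat N a b \<epsilon>) (\<lambda>x. r x \<epsilon>)"
      by (intro exI[of _ "\<lambda>x \<epsilon>. 2 * deriv (A \<epsilon>) x"])
  qed
  then show ?thesis
    using symmetry_recursion_iff_polynomial_identities[OF above] by (simp add: identities_def)
qed

lemma commuting_opQ_iff_recursion:
  assumes V: "smooth V"
  shows "(\<exists>q. (\<forall>j\<le>2*N. smooth (q j)) \<and> commutes_with_schrL V (opQ N q))
    \<longleftrightarrow> (\<exists>a b. (\<forall>k. smooth (a k) \<and> smooth (b k)) \<and> (\<forall>k>N. a k = (\<lambda>_. 0) \<and> b k = (\<lambda>_. 0)) \<and>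
      a N = (\<lambda>_. 1) \<and> symmetry_recursion V a b)"
proof
  assume "\<exists>q. (\<forall>j\<le>2*N. smooth (q j)) \<and> commutes_with_schrL V (opQ N q)"
  then obtain q where q: "\<forall>j\<le>2*N. smooth (q j)" and comm: "commutes_with_schrL V (opQ N q)"
    by blast
  obtain c where c: "diff_op (Suc (2 * N)) c (opQ N q)" and top: "c (Suc (2 * N)) = (\<lambda>_. 1)"
    by (rule that[OF diff_op_opQ[OF q]]) simp
  obtain a b where ab: "\<forall>k. smooth (a k) \<and> smooth (b k)" "\<forall>k>N. a k = (\<lambda>_. 0) \<and> b k = (\<lambda>_. 0)"
    and aN: "a N = (\<lambda>x. (-1) ^ N * ((-1) ^ N * c (Suc (2 * N)) x))"
    and expansion: "\<forall>\<psi>. smooth \<psi> \<longrightarrow> (\<lambda>x. (-1) ^ N * opQ N q \<psi> x) = Lpoly V N a b \<psi>"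
    using diff_op_eq_Lpoly[OF V diff_op_cmult[OF c]] by blast
  have "commutes_with_schrL V (Lpoly V N a b)"
    using comm commutes_with_schrL_scale[OF V c, of "(-1) ^ N" "Lpoly V N a b"] expansion by simp
  then have "symmetry_recursion V a b"
    using Lpoly_commutes_iff_recursion[OF V] ab by blast
  moreover have "a N = (\<lambda>_. 1)" using aN top by simp
  ultimately show "\<exists>a b. (\<forall>k. smooth (a k) \<and> smooth (b k)) \<and> (\<forall>k>N. a k = (\<lambda>_. 0) \<and> b k = (\<lambda>_. 0)) \<and>
      a N = (\<lambda>_. 1) \<and> symmetry_recursion V a b"
    using ab by blast
next
  assume "\<exists>a b. (\<forall>k. smooth (a k) \<and> smooth (b k)) \<and> (\<forall>k>N. a k = (\<lambda>_. 0) \<and> b k = (\<lambda>_. 0)) \<and>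
      a N = (\<lambda>_. 1) \<and> symmetry_recursion V a b"
  then obtain a b where ab: "\<forall>k. smooth (a k) \<and> smooth (b k)" "\<forall>k>N. a k = (\<lambda>_. 0) \<and> b k = (\<lambda>_. 0)"
    and aN: "a N = (\<lambda>_. 1)" and recursion: "symmetry_recursion V a b"
    by blast
  obtain c where c: "diff_op (Suc (2 * N)) c (Lpoly V N a b)"
    and top: "c (Suc (2 * N)) = (\<lambda>x. (-1) ^ N * a N x)"
    using diff_op_Lpoly[OF V] ab by blast
  define q where "q j x = (-1) ^ N * c j x" for j x
  have "opQ N q \<psi> = (\<lambda>x. (-1) ^ N * Lpoly V N a b \<psi> x)" if "smooth \<psi>" for \<psi>
    unfolding q_def using aN top by (intro opQ_eq_diff_op[OF diff_op_cmult[OF c] _ that]) simp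
  then have "commutes_with_schrL V (opQ N q) \<longleftrightarrow> commutes_with_schrL V (Lpoly V N a b)"
    by (rule commutes_with_schrL_scale[OF V c, rotated]) auto
  then have "commutes_with_schrL V (opQ N q)"
    using Lpoly_commutes_iff_recursion[OF V] ab recursion by blast
  moreover have "\<forall>j\<le>2*N. smooth (q j)"
    unfolding q_def using diff_op_smooth_coeff[OF c] by auto
  ultimately show "\<exists>q. (\<forall>j\<le>2*N. smooth (q j)) \<and> commutes_with_schrL V (opQ N q)" by blast
qed

lemma lie_symmetry_iff_recursion:
  assumes V: "smooth V"
  shows "(\<exists>a b r. (\<forall>j\<le>N. smooth (a j) \<and> smooth (b j)) \<and> (\<forall>x. a N x = 1) \<and>
      (\<forall>\<epsilon>. lie_symmetry V \<epsilon> (opQhat N a b \<epsilon>) (\<lambda>x. r x \<epsilon>)))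
    \<longleftrightarrow> (\<exists>a b. (\<forall>k. smooth (a k) \<and> smooth (b k)) \<and> (\<forall>k>N. a k = (\<lambda>_. 0) \<and> b k = (\<lambda>_. 0)) \<and>
      a N = (\<lambda>_. 1) \<and> symmetry_recursion V a b)"
proof
  assume "\<exists>a b r. (\<forall>j\<le>N. smooth (a j) \<and> smooth (b j)) \<and> (\<forall>x. a N x = 1) \<and>
      (\<forall>\<epsilon>. lie_symmetry V \<epsilon> (opQhat N a b \<epsilon>) (\<lambda>x. r x \<epsilon>))"
  then obtain a b r where ab: "\<forall>j\<le>N. smooth (a j) \<and> smooth (b j)" and aN: "\<forall>x. a N x = 1"
    and symmetry: "\<forall>\<epsilon>. lie_symmetry V \<epsilon> (opQhat N a b \<epsilon>) (\<lambda>x. r x \<epsilon>)"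
    by blast
  define a' where "a' k x = (if k \<le> N then a k x else 0)" for k x
  define b' where "b' k x = (if k \<le> N then b k x else 0)" for k x
  have "opQhat N a' b' = opQhat N a b"
    unfolding opQhat_def by (intro ext) (simp add: a'_def b'_def)
  moreover have smooth': "\<forall>k. smooth (a' k) \<and> smooth (b' k)"
  proof
    fix k show "smooth (a' k) \<and> smooth (b' k)"
      using ab by (cases "k \<le> N") (simp_all add: a'_def[abs_def] b'_def[abs_def])
  qed
  moreover have above': "\<forall>k>N. a' k = (\<lambda>_. 0) \<and> b' k = (\<lambda>_. 0)"
    by (simp add: a'_def[abs_def] b'_def[abs_def])
  ultimately have "symmetry_recursion V a' b'"
    using opQhat_symmetry_iff_recursion[OF V, of a' b' N] symmetry by auto
  moreover have "a' N = (\<lambda>_. 1)" using aN by (simp add: a'_def[abs_def])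
  ultimately show "\<exists>a b. (\<forall>k. smooth (a k) \<and> smooth (b k)) \<and> (\<forall>k>N. a k = (\<lambda>_. 0) \<and> b k = (\<lambda>_. 0)) \<and>
      a N = (\<lambda>_. 1) \<and> symmetry_recursion V a b"
    using smooth' above' by blast
next
  assume "\<exists>a b. (\<forall>k. smooth (a k) \<and> smooth (b k)) \<and> (\<forall>k>N. a k = (\<lambda>_. 0) \<and> b k = (\<lambda>_. 0)) \<and>
      a N = (\<lambda>_. 1) \<and> symmetry_recursion V a b"
  then obtain a b where ab: "\<forall>k. smooth (a k) \<and> smooth (b k)" "\<forall>k>N. a k = (\<lambda>_. 0) \<and> b k = (\<lambda>_. 0)"
    and aN: "a N = (\<lambda>_. 1)" and recursion: "symmetry_recursion V a b"
    by blast
  obtain r where "\<forall>\<epsilon>. lie_symmetry V \<epsilon> (opQhat N a b \<epsilon>) (\<lambda>x. r x \<epsilon>)"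
    using opQhat_symmetry_iff_recursion[OF V, of a b N] ab recursion by auto
  with ab aN show "\<exists>a b r. (\<forall>j\<le>N. smooth (a j) \<and> smooth (b j)) \<and> (\<forall>x. a N x = 1) \<and>
      (\<forall>\<epsilon>. lie_symmetry V \<epsilon> (opQhat N a b \<epsilon>) (\<lambda>x. r x \<epsilon>))"
    by (intro exI[of _ a] exI[of _ b] exI[of _ r]) auto
qed

theorem lemma1:
  fixes V :: "real \<Rightarrow> real" and N :: nat
  assumes "smooth V"
  shows "(\<exists>q :: nat \<Rightarrow> real \<Rightarrow> real. (\<forall>j\<le>2*N. smooth (q j)) \<and>
            (\<forall>\<psi>. smooth \<psi> \<longrightarrow> opQ N q (schrL V \<psi>) = schrL V (opQ N q \<psi>)))
     \<longleftrightarrow>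
         (\<exists>(a :: nat \<Rightarrow> real \<Rightarrow> real) (b :: nat \<Rightarrow> real \<Rightarrow> real) (r :: real \<Rightarrow> real \<Rightarrow> real).
            (\<forall>j\<le>N. smooth (a j) \<and> smooth (b j)) \<and> (\<forall>x. a N x = 1) \<and>
            (\<forall>\<epsilon> :: real. \<forall>\<psi>. smooth \<psi> \<longrightarrow>
               (\<lambda>x. schrL V (opQhat N a b \<epsilon> \<psi>) x + \<epsilon> * opQhat N a b \<epsilon> \<psi> x)
               - opQhat N a b \<epsilon> (\<lambda>x. schrL V \<psi> x + \<epsilon> * \<psi> x)
               = (\<lambda>x. r x \<epsilon> * (schrL V \<psi> x + \<epsilon> * \<psi> x))))"
  using commuting_opQ_iff_recursion[OF assms, of N] lie_symmetry_iff_recursion[OF assms, of N]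
  unfolding commutes_with_schrL_def lie_symmetry_def by simp

end
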